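(* In the Setting, it cannot hold simultaneously that $r=\sqrt{K^2-\lambda_2V}$, $r+s=-\sqrt{K^2-\lambda_2V}$, $s=-\sqrt{K-\lambda_1}$, $f_1=0$, $g_1=f-c+1$, $g_2=c-1$ and $f_2=g-c$.
   Context: Setting: $\Gamma$ is a primitive strongly regular graph with parameters $(v,k,\lambda,\mu)$ (a $k$-regular graph on $v$ vertices, any two adjacent vertices having $\lambda$ and any two distinct non-adjacent vertices having $\mu$ common neighbours; primitive means $\Gamma$ and its complement are connected), with spectrum $k^1, r^f, s^g$ where $k>r>s$ and exponents are multiplicities. $C$ is a coclique in $\Gamma$ of size $c=\frac{vs}{s-k}$. A $K$-regular graph on $V$ vertices, neither complete nor edgeless, is a divisible design graph with parameters $(V,K,\lambda_1,\lambda_2;m,n)$ if its vertex set can be partitioned into $m$ canonical classes of size $n$ such that two distinct vertices in the same class have exactly $\lambda_1$ common neighbours and two vertices in different classes have exactly $\lambda_2$ common neighbours; it is proper unless $m=1$, $n=1$ or $\lambda_1=\lambda_2$. It is assumed that the subgraph $\Delta$ induced on $V(\Gamma)\setminus C$ is a proper divisible design graph with parameters $(V,K,\lambda_1,\lambda_2;m,n)$. Let $A$ be the adjacency matrix of $\Delta$, $W$ the space of vectors constant on each canonical class and $\mathbf{1}$ the all-ones vector. It is known that $A$ acts on $W^\perp$ with eigenvalues $\pm\sqrt{K-\lambda_1}$, whose multiplicities are denoted $f_1$ (for $+$) and $f_2$ (for $-$), with $f_1+f_2=m(n-1)$, and on $W\cap\mathbf{1}^\perp$ with eigenvalues $\pm\sqrt{K^2-\lambda_2V}$,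 with multiplicities $g_1$ (for $+$) and $g_2$ (for $-$), $g_1+g_2=m-1$. It is also known that the spectrum of $\Delta$ is $(k+s)^1, r^{f-c+1}, (r+s)^{c-1}, s^{g-c}$, with $c<g$. *)

theory Defs
  imports "HOL-Analysis.Analysis" "HOL-Library.Disjoint_Sets"
begin

text \<open>Graphs: vertex set = a finite type 'a; adjacency = symmetric irreflexive relation E.
  Vectors: real^'a.  A subgraph induced on S acts on the vectors supported on S.\<close>

definition simple_graph :: "('a \<Rightarrow> 'a \<Rightarrow> bool) \<Rightarrow> bool" where
  "simple_graph E \<longleftrightarrow> (\<forall>x y. E x y \<longleftrightarrow> E y x) \<and> (\<forall>x. \<not> E x x)"

definition connected_graph :: "('a \<Rightarrow> 'a \<Rightarrow> bool) \<Rightarrow> bool" where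
  "connected_graph E \<longleftrightarrow> (\<forall>x y. E\<^sup>*\<^sup>* x y)"

definition complement_graph :: "('a \<Rightarrow> 'a \<Rightarrow> bool) \<Rightarrow> 'a \<Rightarrow> 'a \<Rightarrow> bool" where
  "complement_graph E x y \<longleftrightarrow> x \<noteq> y \<and> \<not> E x y"

definition srg :: "('a::finite \<Rightarrow> 'a \<Rightarrow> bool) \<Rightarrow> nat \<Rightarrow> nat \<Rightarrow> nat \<Rightarrow> nat \<Rightarrow> bool" where
  "srg E v k la mu \<longleftrightarrow> simple_graph E \<and> v = CARD('a) \<and>
     (\<forall>x. card {y. E x y} = k) \<and>
     (\<forall>x y. x \<noteq> y \<and> E x y \<longrightarrow> card {z. E x z \<and> E y z} = la) \<and>
     (\<forall>x y. x \<noteq> y \<and> \<not> E x y \<longrightarrow> card {z. E x z \<and> E y z} = mu)"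

definition primitive_srg :: "('a::finite \<Rightarrow> 'a \<Rightarrow> bool) \<Rightarrow> nat \<Rightarrow> nat \<Rightarrow> nat \<Rightarrow> nat \<Rightarrow> bool" where
  "primitive_srg E v k la mu \<longleftrightarrow> srg E v k la mu \<and> connected_graph E \<and>
     connected_graph (complement_graph E)"

definition coclique :: "('a \<Rightarrow> 'a \<Rightarrow> bool) \<Rightarrow> 'a set \<Rightarrow> bool" where
  "coclique E C \<longleftrightarrow> (\<forall>x\<in>C. \<forall>y\<in>C. \<not> E x y)"

definition ddg :: "('a \<Rightarrow> 'a \<Rightarrow> bool) \<Rightarrow> 'a set \<Rightarrow> 'a set set \<Rightarrow>
    nat \<Rightarrow> nat \<Rightarrow> nat \<Rightarrow> nat \<Rightarrow> nat \<Rightarrow> nat \<Rightarrow> bool" where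
  "ddg E D P V K l1 l2 m n \<longleftrightarrow> V = card D \<and>
     (\<forall>x\<in>D. card {y\<in>D. E x y} = K) \<and>
     (\<exists>x\<in>D. \<exists>y\<in>D. x \<noteq> y \<and> \<not> E x y) \<and>
     (\<exists>x\<in>D. \<exists>y\<in>D. E x y) \<and>
     partition_on D P \<and> card P = m \<and> (\<forall>X\<in>P. card X = n) \<and>
     (\<forall>X\<in>P. \<forall>x\<in>X. \<forall>y\<in>X. x \<noteq> y \<longrightarrow> card {z\<in>D. E x z \<and> E y z} = l1) \<and>
     (\<forall>X\<in>P. \<forall>Y\<in>P. X \<noteq> Y \<longrightarrow> (\<forall>x\<in>X. \<forall>y\<in>Y. card {z\<in>D. E x z \<and> E y z} = l2))"

definition proper_ddg :: "('a \<Rightarrow> 'a \<Rightarrow> bool) \<Rightarrow> 'a set \<Rightarrow> 'a set set \<Rightarrow>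
    nat \<Rightarrow> nat \<Rightarrow> nat \<Rightarrow> nat \<Rightarrow> nat \<Rightarrow> nat \<Rightarrow> bool" where
  "proper_ddg E D P V K l1 l2 m n \<longleftrightarrow> ddg E D P V K l1 l2 m n \<and>
     m \<noteq> 1 \<and> n \<noteq> 1 \<and> l1 \<noteq> l2"

definition supp_on :: "'a set \<Rightarrow> (real^'a::finite) set" where
  "supp_on S = {x. \<forall>i. i \<notin> S \<longrightarrow> x $ i = 0}"

definition adj_op :: "('a::finite \<Rightarrow> 'a \<Rightarrow> bool) \<Rightarrow> 'a set \<Rightarrow> real^'a \<Rightarrow> real^'a" where
  "adj_op E S x = (\<chi> i. if i \<in> S then (\<Sum>j\<in>S. if E i j then x $ j else 0) else 0)"

definition eigsp :: "('a::finite \<Rightarrow> 'a \<Rightarrow> bool) \<Rightarrow> 'a set \<Rightarrow> (real^'a) set \<Rightarrow> real \<Rightarrow> (real^'a) set" where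
  "eigsp E S U \<theta> = {x \<in> U \<inter> supp_on S. adj_op E S x = \<theta> *\<^sub>R x}"

definition eig_mult :: "('a::finite \<Rightarrow> 'a \<Rightarrow> bool) \<Rightarrow> 'a set \<Rightarrow> real \<Rightarrow> nat" where
  "eig_mult E S \<theta> = dim (eigsp E S UNIV \<theta>)"

definition class_const :: "'a set \<Rightarrow> 'a set set \<Rightarrow> (real^'a::finite) set" where
  "class_const D P = {x \<in> supp_on D. \<forall>X\<in>P. \<forall>i\<in>X. \<forall>j\<in>X. x $ i = x $ j}"

definition ones_on :: "'a set \<Rightarrow> real^'a::finite" where
  "ones_on D = (\<chi> i. if i \<in> D then 1 else 0)"

definition orth_in :: "'a set \<Rightarrow> (real^'a::finite) set \<Rightarrow> (real^'a) set" where
  "orth_in D U = {x \<in> supp_on D. \<forall>w\<in>U. x \<bullet> w = 0}"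

end

theory Submission
  imports Defs
begin

text \<open>If \<open>f\<^sub>1 = 0\<close>, then \<open>f\<^sub>2 = m(n - 1)\<close> is the full dimension of \<open>W\<^sup>\<bottom>\<close>, so every vector of
  \<open>W\<^sup>\<bottom>\<close> is an eigenvector for \<open>-\<surd>(K - \<lambda>\<^sub>1)\<close>. Applied to \<open>e\<^sub>a - e\<^sub>b\<close> with \<open>a \<noteq> b\<close> in one
  canonical class, the \<open>a\<close>-coordinate shows that this eigenvalue, i.e. \<open>s\<close>, is \<open>0\<close> or \<open>-1\<close>.
  On the other hand \<open>r = \<surd>t\<close> and \<open>r + s = -\<surd>t\<close> with \<open>t = K\<^sup>2 - \<lambda>\<^sub>2V\<close> give \<open>s = -2\<surd>t\<close>, and
  \<open>r > s\<close> forces \<open>s = -1\<close>, hence \<open>t = 1/4\<close>, which is impossible for an integer \<open>t\<close>.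
  Only the canonical partition, irreflexivity of the graph and \<open>f\<^sub>1 + f\<^sub>2 = m(n - 1)\<close> are used.\<close>

lemma subspace_supp_on: "subspace (supp_on D)"
  unfolding subspace_def supp_on_def by auto

lemma dim_supp_on: "dim (supp_on (D::'a::finite set)) = card D"
  using dim_substandard_cart[of D, where 'a=real] unfolding supp_on_def dim_vec_eq by simp

lemma subspace_orth_in: "subspace (orth_in D U)"
  unfolding subspace_def orth_in_def supp_on_def by (auto simp: inner_add_left)

lemma linear_adj_op: "linear (adj_op E S)"
  by (rule linearI)
     (auto simp: adj_op_def vec_eq_iff sum.distrib[symmetric] sum_distrib_left if_distrib
           intro!: sum.cong cong: if_cong)

lemma subspace_eigsp: "subspace U \<Longrightarrow> subspace (eigsp E S U \<theta>)"
  using linear_adj_op[of E S] subspace_supp_on[of S]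
  unfolding subspace_def eigsp_def
  by (auto simp: linear_add linear_scale linear_0 scaleR_add_right)

lemma eigsp_eq_if_dim_le:
  assumes "subspace U" and "dim U \<le> dim (eigsp E S U \<theta>)"
  shows "eigsp E S U \<theta> = U"
  by (rule subspace_dim_equal) (use assms subspace_eigsp in \<open>auto simp: eigsp_def\<close>)

lemma card_partition_on_uniform:
  assumes "finite A" and "partition_on A P" and "\<forall>X\<in>P. card X = n"
  shows "card A = card P * n"
proof -
  have "card A = card (\<Union>P)" using partition_onD1[OF assms(2)] by simp
  also have "\<dots> = sum card P"
    using partition_onD1[OF assms(2)] partition_onD2[OF assms(2)] assms(1)
    by (intro card_Union_disjoint) (auto simp: disjoint_def pairwise_def disjnt_def
        intro: finite_subset)
  also have "\<dots> = card P * n" using assms(3) by simp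
  finally show ?thesis .
qed

lemma ones_on_class_in_class_const:
  assumes "partition_on D P" and "X \<in> P"
  shows "ones_on X \<in> class_const D P"
  using assms unfolding partition_on_def disjoint_def class_const_def supp_on_def ones_on_def
  by auto

lemma inj_ones_on: "inj ones_on"
  by (rule injI) (auto simp: ones_on_def vec_eq_iff split: if_splits)

lemma ones_on_empty: "ones_on {} = 0"
  by (simp add: ones_on_def vec_eq_iff)

lemma independent_ones_on_classes:
  assumes "partition_on D P"
  shows "independent (ones_on ` P)"
proof (rule pairwise_orthogonal_independent)
  show "pairwise orthogonal (ones_on ` P)"
  proof (rule pairwise_imageI)
    fix X Y assume "X \<in> P" "Y \<in> P" "X \<noteq> Y"
    then have "X \<inter> Y = {}" using partition_onD2[OF assms] by (auto simp: disjoint_def)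
    then show "orthogonal (ones_on X) (ones_on Y)"
      by (auto simp: orthogonal_def inner_vec_def ones_on_def intro!: sum.neutral)
  qed
  show "0 \<notin> ones_on ` P"
    using partition_onD3[OF assms] inj_ones_on ones_on_empty by (metis image_iff injD)
qed

lemma dim_orth_class_const_le:
  assumes "partition_on (D::'a::finite set) P"
  shows "dim (orth_in D (class_const D P)) + card P \<le> card D"
proof -
  let ?Wp = "orth_in D (class_const D P)"
  have dim_ones: "dim (ones_on ` P) = card P"
    using dim_eq_card_independent[OF independent_ones_on_classes[OF assms]]
      card_image[OF inj_on_subset[OF inj_ones_on subset_UNIV]] by simp
  have "dim (?Wp \<union> ones_on ` P) = dim ?Wp + dim (ones_on ` P)"
    using ones_on_class_in_class_const[OF assms]
    by (intro dim_orthogonal_sum) (auto simp: orth_in_def)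
  moreover have "dim (?Wp \<union> ones_on ` P) \<le> dim (supp_on D)"
    using ones_on_class_in_class_const[OF assms]
    by (intro dim_subset) (auto simp: orth_in_def class_const_def)
  ultimately show ?thesis using dim_ones dim_supp_on[of D] by simp
qed

lemma axis_diff_in_orth_class_const:
  assumes "partition_on D P" and "X \<in> P" and "a \<in> X" and "b \<in> X"
  shows "axis a (1::real) - axis b 1 \<in> orth_in D (class_const D P)"
proof -
  have "a \<in> D" "b \<in> D" using partition_onD1[OF assms(1)] assms(2-4) by auto
  moreover have "w $ a = w $ b" if "w \<in> class_const D P" for w
    using that assms(2-4) unfolding class_const_def by blast
  moreover have "(axis a (1::real) - axis b 1) $ i = 0" if "i \<notin> D" for i
    using that \<open>a \<in> D\<close> \<open>b \<in> D\<close> by (auto simp: axis_def)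
  ultimately show ?thesis by (auto simp: orth_in_def supp_on_def inner_diff_left inner_axis')
qed

lemma adj_op_axis_diff:
  assumes "a \<in> S" and "b \<in> S" and "a \<noteq> b" and "\<not> E a a"
  shows "adj_op E S (axis a (1::real) - axis b 1) $ a = (if E a b then -1 else 0)"
proof -
  have "adj_op E S (axis a 1 - axis b 1) $ a
      = (\<Sum>j\<in>S. if E a j then (axis a (1::real) - axis b 1) $ j else 0)"
    using assms(1) by (simp add: adj_op_def)
  also have "\<dots> = (\<Sum>j\<in>S. if j = b then (if E a b then -1 else 0) else 0)"
    using assms(3,4) by (intro sum.cong) (auto simp: axis_def)
  also have "\<dots> = (if E a b then -1 else 0)" using assms(2) by simp
  finally show ?thesis .
qed

lemma eigenvalue_on_orth_class_const:
  assumes part: "partition_on D P" and X: "X \<in> P" "a \<in> X" "b \<in> X" "a \<noteq> b"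
    and irrefl: "\<not> E a a"
    and full: "eigsp E D (orth_in D (class_const D P)) \<theta> = orth_in D (class_const D P)"
  shows "\<theta> = 0 \<or> \<theta> = -1"
proof -
  define x where "x = axis a (1::real) - axis b 1"
  have "x \<in> eigsp E D (orth_in D (class_const D P)) \<theta>"
    using axis_diff_in_orth_class_const[OF part X(1-3)] full by (simp add: x_def)
  then have "adj_op E D x $ a = \<theta> * x $ a" by (simp add: eigsp_def)
  moreover have "a \<in> D" "b \<in> D" using partition_onD1[OF part] X by auto
  ultimately have "(if E a b then -1 else 0) = \<theta>"
    using adj_op_axis_diff[of a D b E] X(4) irrefl by (simp add: x_def axis_def)
  then show ?thesis by (auto split: if_splits)
qed

lemma sqrt_of_int_neq_half: "sqrt (of_int z) \<noteq> 1 / 2"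
proof
  assume "sqrt (of_int z) = 1 / 2"
  then have "sqrt (of_int z) = sqrt (1 / 4)" by (simp add: real_sqrt_divide)
  then have "of_int (4 * z) = (1::real)" by simp
  then have "4 * z = 1" by linarith
  then show False by presburger
qed

theorem mainTheorem4:
  fixes E :: "'a::finite \<Rightarrow> 'a \<Rightarrow> bool"
    and v k la mu f g c :: nat and r s :: real
    and C :: "'a set" and P :: "'a set set"
    and V K l1 l2 m n f1 f2 g1 g2 :: nat
  assumes prim: "primitive_srg E v k la mu"
    and spec: "\<And>\<theta>. eig_mult E UNIV \<theta> =
        (if \<theta> = real k then 1 else 0) + (if \<theta> = r then f else 0) + (if \<theta> = s then g else 0)"
    and kr: "real k > r" and rs: "r > s"
    and cocl: "coclique E C" and cardC: "card C = c"
    and csize: "real c = real v * s / (s - real k)"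
    and ddg: "proper_ddg E (UNIV - C) P V K l1 l2 m n"
    and f1_def: "f1 = dim (eigsp E (UNIV - C) (orth_in (UNIV - C) (class_const (UNIV - C) P))
                   (sqrt (real K - real l1)))"
    and f2_def: "f2 = dim (eigsp E (UNIV - C) (orth_in (UNIV - C) (class_const (UNIV - C) P))
                   (- sqrt (real K - real l1)))"
    and g1_def: "g1 = dim (eigsp E (UNIV - C)
                   (class_const (UNIV - C) P \<inter> orth_in (UNIV - C) {ones_on (UNIV - C)})
                   (sqrt (real K ^ 2 - real l2 * real V)))"
    and g2_def: "g2 = dim (eigsp E (UNIV - C)
                   (class_const (UNIV - C) P \<inter> orth_in (UNIV - C) {ones_on (UNIV - C)})
                   (- sqrt (real K ^ 2 - real l2 * real V)))"
    and known_f: "f1 + f2 = m * (n - 1)"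
    and known_g: "g1 + g2 = m - 1"
    and known_specD: "\<And>\<theta>. int (eig_mult E (UNIV - C) \<theta>) =
        (if \<theta> = real k + s then 1 else 0) + (if \<theta> = r then int f - int c + 1 else 0)
        + (if \<theta> = r + s then int c - 1 else 0) + (if \<theta> = s then int g - int c else 0)"
    and known_cg: "c < g"
  shows "\<not> (r = sqrt (real K ^ 2 - real l2 * real V) \<and>
            r + s = - sqrt (real K ^ 2 - real l2 * real V) \<and>
            s = - sqrt (real K - real l1) \<and>
            f1 = 0 \<and> int g1 = int f - int c + 1 \<and> int g2 = int c - 1 \<and> int f2 = int g - int c)"
proof
  define D where "D = UNIV - C"
  define t where "t = real K ^ 2 - real l2 * real V"
  assume "r = sqrt (real K ^ 2 - real l2 * real V) \<and>
            r + s = - sqrt (real K ^ 2 - real l2 * real V) \<and>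
            s = - sqrt (real K - real l1) \<and>
            f1 = 0 \<and> int g1 = int f - int c + 1 \<and> int g2 = int c - 1 \<and> int f2 = int g - int c"
  then have r: "r = sqrt t" and rs_sum: "r + s = - sqrt t"
    and s: "s = - sqrt (real K - real l1)" and f1: "f1 = 0"
    unfolding t_def by auto
  have part: "partition_on D P" and cP: "card P = m" and cX: "\<forall>X\<in>P. card X = n"
    and "D \<noteq> {}" and "n \<noteq> 1"
    using ddg unfolding proper_ddg_def ddg_def D_def by auto
  obtain X where X: "X \<in> P"
    using \<open>D \<noteq> {}\<close> partition_onD1[OF part] by blast
  have "X \<noteq> {}" using partition_onD3[OF part] X by blast
  then have "card X \<noteq> 0" by simp
  then have "\<not> card X \<le> 1" using cX X \<open>n \<noteq> 1\<close> by (simp add: le_Suc_eq)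
  then obtain a b where ab: "a \<in> X" "b \<in> X" "a \<noteq> b"
    using card_le_Suc0_iff_eq[of X] by auto
  have "\<not> E a a" using prim by (simp add: primitive_srg_def srg_def simple_graph_def)
  have "card D = m * n" using card_partition_on_uniform[OF _ part cX] cP by simp
  then have "dim (orth_in D (class_const D P)) \<le> f2"
    using dim_orth_class_const_le[OF part] known_f f1 cP by (simp add: diff_mult_distrib2)
  then have "eigsp E D (orth_in D (class_const D P)) s = orth_in D (class_const D P)"
    using f2_def s subspace_orth_in by (intro eigsp_eq_if_dim_le) (auto simp: D_def)
  then have "s = 0 \<or> s = -1"
    using eigenvalue_on_orth_class_const[of D P X a b E] part X ab \<open>\<not> E a a\<close> by blast
  moreover have "s = - 2 * sqrt t" using r rs_sum by simp
  ultimately have "sqrt t = 1 / 2" using rs r by (elim disjE) linarith+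
  moreover have "t = of_int (int K ^ 2 - int l2 * int V)" by (simp add: t_def)
  ultimately show False using sqrt_of_int_neq_half by metis
qed

end
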